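(* Let $\mathfrak{P}$ be a compactness-like topological property and $X$ a space. Then $\lambda_\mathfrak{P}X=\beta X$ if and only if $X$ has $\mathfrak{P}$.
   Context: All spaces are completely regular Hausdorff; $\beta X$ is the Stone–Čech compactification. $\mathrm{Coz}(X)$ is the set of cozero-sets of $X$. $\lambda_\mathfrak{P}X=\bigcup\{\mathrm{int}_{\beta X}\mathrm{cl}_{\beta X}C: C\in\mathrm{Coz}(X),\ \mathrm{cl}_XC\text{ has }\mathfrak{P}\}$. A topological property is compactness-like if it is hereditary to clopen subspaces, finitely additive (finite disjoint unions of closed subspaces with $\mathfrak{P}$ have $\mathfrak{P}$), invariant and inverse invariant under perfect surjections, and satisfies Mrówka's condition (W): if a space $Z$ has a point $p$ with an open base $\mathscr{B}$ at $p$ such that $Z\setminus B$ has $\mathfrak{P}$ for all $B\in\mathscr{B}$, then $Z$ has $\mathfrak{P}$. *)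

theory Defs
  imports "HOL-Analysis.Analysis"
begin

definition tychonoff :: "'a topology \<Rightarrow> bool" where
  "tychonoff X \<longleftrightarrow> completely_regular_space X \<and> Hausdorff_space X"

definition cozero_set :: "'a topology \<Rightarrow> 'a set \<Rightarrow> bool" where
  "cozero_set X C \<longleftrightarrow>
     (\<exists>f. continuous_map X euclideanreal f \<and> C = {x \<in> topspace X. f x \<noteq> 0})"

definition stone_cech :: "'a topology \<Rightarrow> 'b topology \<Rightarrow> ('a \<Rightarrow> 'b) \<Rightarrow> bool" where
  "stone_cech X K e \<longleftrightarrow>
     compact_space K \<and> Hausdorff_space K \<and> embedding_map X K e \<and>
     K closure_of (e ` topspace X) = topspace K \<and>
     (\<forall>f. continuous_map X euclideanreal f \<and> (\<exists>B. \<forall>x\<in>topspace X. \<bar>f x\<bar> \<le> B) \<longrightarrow>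
        (\<exists>g. continuous_map K euclideanreal g \<and> (\<forall>x\<in>topspace X. g (e x) = f x)))"

definition lambda_P :: "('a topology \<Rightarrow> bool) \<Rightarrow> 'a topology \<Rightarrow> 'b topology \<Rightarrow> ('a \<Rightarrow> 'b) \<Rightarrow> 'b set" where
  "lambda_P P X K e =
     \<Union>{K interior_of (K closure_of (e ` C)) | C.
          cozero_set X C \<and> P (subtopology X (X closure_of C))}"

definition open_base_at :: "'a topology \<Rightarrow> 'a \<Rightarrow> 'a set set \<Rightarrow> bool" where
  "open_base_at Z p \<B> \<longleftrightarrow>
     (\<forall>B\<in>\<B>. openin Z B \<and> p \<in> B) \<and>
     (\<forall>U. openin Z U \<and> p \<in> U \<longrightarrow> (\<exists>B\<in>\<B>. B \<subseteq> U))"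

text \<open>Compactness-like properties (of spaces whose points range over the type 'a).\<close>
definition compactness_like :: "('a topology \<Rightarrow> bool) \<Rightarrow> bool" where
  "compactness_like P \<longleftrightarrow>
     \<comment> \<open>hereditary to clopen subspaces\<close>
     (\<forall>Y A. tychonoff Y \<and> P Y \<and> closedin Y A \<and> openin Y A \<longrightarrow> P (subtopology Y A)) \<and>
     \<comment> \<open>finitely additive\<close>
     (\<forall>Y \<F>. tychonoff Y \<and> finite \<F> \<and> \<Union>\<F> = topspace Y \<and>
        (\<forall>F\<in>\<F>. closedin Y F \<and> P (subtopology Y F)) \<and>
        (\<forall>F\<in>\<F>. \<forall>G\<in>\<F>. F \<noteq> G \<longrightarrow> F \<inter> G = {}) \<longrightarrow> P Y) \<and>
     \<comment> \<open>invariant under perfect surjections\<close>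
     (\<forall>Y Z f. tychonoff Y \<and> tychonoff Z \<and> perfect_map Y Z f \<and> P Y \<longrightarrow> P Z) \<and>
     \<comment> \<open>inverse invariant under perfect surjections\<close>
     (\<forall>Y Z f. tychonoff Y \<and> tychonoff Z \<and> perfect_map Y Z f \<and> P Z \<longrightarrow> P Y) \<and>
     \<comment> \<open>Mrowka's condition (W)\<close>
     (\<forall>Z p \<B>. tychonoff Z \<and> p \<in> topspace Z \<and> open_base_at Z p \<B> \<and>
        (\<forall>B\<in>\<B>. P (subtopology Z (topspace Z - B))) \<longrightarrow> P Z)"

end

theory Submission
  imports Defs
begin

text \<open>
  If X has P, then X is itself a cozero-set whose closure has P, and the interior of its closure
  in \<beta>X is all of \<beta>X. Conversely, if \<lambda>_P X = \<beta>X, compactness of \<beta>X yields finitely many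
  cozero-sets C_k whose int cl C_k cover \<beta>X; pulling back along the embedding, the closures
  cl_X C_k cover X, so X is a finite union of closed subspaces with P. Such an X has P: the free
  sum of the pieces has P by finite additivity and maps perfectly onto X by the projection.

  As P is a predicate on spaces over one fixed point type, the free sum is transported into that
  type along an injection nat \<times> 'a \<Rightarrow> 'a, which exists when the type is infinite. When the type is
  finite, X is a finite T1 space and has P by finite additivity over its points; each point has P
  by condition (W), the empty space having P as an empty disjoint union.\<close>

lemma compactness_like_disjoint_closed_cover:
  assumes "compactness_like P" "tychonoff Y" "finite \<F>" "\<Union>\<F> = topspace Y"
    and "\<And>F. F \<in> \<F> \<Longrightarrow> closedin Y F" "\<And>F. F \<in> \<F> \<Longrightarrow> P (subtopology Y F)"
    and "pairwise disjnt \<F>"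
  shows "P Y"
  using assms unfolding compactness_like_def pairwise_def disjnt_def by meson

lemma compactness_like_perfect_image:
  assumes "compactness_like P" "tychonoff Y" "tychonoff Z" "perfect_map Y Z f" "P Y"
  shows "P Z"
  using assms unfolding compactness_like_def by meson

lemma compactness_like_Mrowka:
  assumes "compactness_like P" "tychonoff Z" "p \<in> topspace Z" "open_base_at Z p \<B>"
    and "\<And>B. B \<in> \<B> \<Longrightarrow> P (subtopology Z (topspace Z - B))"
  shows "P Z"
  using assms unfolding compactness_like_def by meson

lemma tychonoff_subtopology: "tychonoff X \<Longrightarrow> tychonoff (subtopology X S)"
  by (simp add: tychonoff_def completely_regular_space_subtopology Hausdorff_space_subtopology)

lemma homeomorphic_tychonoff: "X homeomorphic_space Y \<Longrightarrow> tychonoff X \<longleftrightarrow> tychonoff Y"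
  unfolding tychonoff_def
  by (simp add: homeomorphic_completely_regular_space homeomorphic_Hausdorff_space)

lemma compactness_like_homeomorphic:
  assumes "compactness_like P" "tychonoff X" "X homeomorphic_space Y" "P X"
  shows "P Y"
  using assms homeomorphic_imp_perfect_map homeomorphic_tychonoff
  by (meson compactness_like_perfect_image homeomorphic_space)

lemma compactness_like_empty_space:
  assumes "compactness_like P" "topspace Y = {}"
  shows "P Y"
proof (rule compactness_like_disjoint_closed_cover[OF assms(1), of Y "{}"])
  show "tychonoff Y"
    using assms(2) by (simp add: tychonoff_def completely_regular_space_def Hausdorff_space_def)
qed (use assms(2) in auto)

lemma compactness_like_singleton_space:
  assumes "compactness_like P" "tychonoff Z" "topspace Z = {p}"
  shows "P Z"
proof (rule compactness_like_Mrowka[OF assms(1,2)])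
  show "open_base_at Z p {{p}}"
    using assms(3) openin_topspace[of Z] by (auto simp: open_base_at_def)
  show "P (subtopology Z (topspace Z - B))" if "B \<in> {{p}}" for B
    using that assms(3) by (intro compactness_like_empty_space[OF assms(1)]) auto
qed (use assms(3) in auto)

lemma compactness_like_finite_space:
  assumes "compactness_like P" "tychonoff X" "finite (topspace X)"
  shows "P X"
proof (rule compactness_like_disjoint_closed_cover[OF assms(1,2)])
  have "t1_space X"
    using assms(2) by (simp add: tychonoff_def Hausdorff_imp_t1_space)
  then show "closedin X F" if "F \<in> (\<lambda>x. {x}) ` topspace X" for F
    using that by (auto simp: t1_space_closedin_singleton)
  show "P (subtopology X F)" if "F \<in> (\<lambda>x. {x}) ` topspace X" for F
    using that assms by (auto intro: compactness_like_singleton_space tychonoff_subtopology)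
qed (use assms(3) in \<open>auto simp: pairwise_def disjnt_def\<close>)

lemma infinite_imp_inj_nat_times:
  assumes "infinite (UNIV :: 'a set)"
  obtains j :: "nat \<times> 'a \<Rightarrow> 'a" where "inj j"
proof -
  have "ordLeq3 (card_of (UNIV :: nat set)) (card_of (UNIV :: 'a set))"
    using assms infinite_iff_card_of_nat by blast
  then have "ordIso2 (card_of ((UNIV :: nat set) \<times> (UNIV :: 'a set))) (card_of (UNIV :: 'a set))"
    using assms by (intro card_of_Times_infinite_simps(3)) auto
  then obtain j :: "nat \<times> 'a \<Rightarrow> 'a" where "bij_betw j ((UNIV :: nat set) \<times> (UNIV :: 'a set)) UNIV"
    using card_of_ordIso by blast
  then have "inj j"
    by (simp add: bij_betw_def)
  then show thesis
    by (rule that)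
qed

lemma homeomorphic_map_pullback_inv_into:
  assumes "inj_on f (topspace X)"
  shows "homeomorphic_map X (pullback_topology (f ` topspace X) (inv_into (topspace X) f) X) f"
    (is "homeomorphic_map X ?Y f")
proof -
  have "homeomorphic_maps X ?Y f (inv_into (topspace X) f)"
    unfolding homeomorphic_maps_def
  proof (intro conjI ballI)
    have "continuous_map X X (inv_into (topspace X) f \<circ> f)"
      by (rule continuous_map_eq[OF continuous_map_id]) (simp add: assms)
    then show "continuous_map X ?Y f"
      by (rule continuous_map_pullback') auto
    show "continuous_map ?Y X (inv_into (topspace X) f)"
      using continuous_map_pullback[OF continuous_map_id] by simp
  qed (simp_all add: assms topspace_pullback_topology f_inv_into_f)
  then show ?thesis
    by (rule homeomorphic_maps_imp_map)
qed

text \<open>The free sum of the subspaces \<open>S i\<close>, realised inside \<open>discrete_topology I \<times> X\<close> (rather than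
  with \<^const>\<open>sum_topology\<close>) so that complete regularity is inherited from the product.\<close>
definition sum_of_subspaces :: "'a topology \<Rightarrow> 'i set \<Rightarrow> ('i \<Rightarrow> 'a set) \<Rightarrow> ('i \<times> 'a) topology"
  where "sum_of_subspaces X I S = subtopology (prod_topology (discrete_topology I) X) (Sigma I S)"

lemma topspace_sum_of_subspaces:
  "(\<And>i. i \<in> I \<Longrightarrow> S i \<subseteq> topspace X) \<Longrightarrow> topspace (sum_of_subspaces X I S) = Sigma I S"
  unfolding sum_of_subspaces_def by auto

lemma tychonoff_sum_of_subspaces: "tychonoff X \<Longrightarrow> tychonoff (sum_of_subspaces X I S)"
  unfolding sum_of_subspaces_def
  by (simp add: tychonoff_def completely_regular_space_prod_topology Hausdorff_space_prod_topology
      completely_regular_space_discrete_topology completely_regular_space_subtopology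
      Hausdorff_space_subtopology)

lemma closedin_slice_sum_of_subspaces:
  "\<lbrakk>i \<in> I; closedin X (S i)\<rbrakk> \<Longrightarrow> closedin (sum_of_subspaces X I S) ({i} \<times> S i)"
  unfolding sum_of_subspaces_def
  by (intro closedin_subset_topspace) (auto simp: closedin_prod_Times_iff)

lemma homeomorphic_space_slice_sum_of_subspaces:
  assumes "i \<in> I"
  shows "subtopology X (S i) homeomorphic_space subtopology (sum_of_subspaces X I S) ({i} \<times> S i)"
proof -
  have "Sigma I S \<inter> ({i} \<times> S i) = {i} \<times> S i"
    using assms by blast
  then have "subtopology (sum_of_subspaces X I S) ({i} \<times> S i)
        = prod_topology (subtopology (discrete_topology I) {i}) (subtopology X (S i))"
    by (simp add: sum_of_subspaces_def subtopology_subtopology subtopology_Times)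
  then show ?thesis
    using assms by (metis homeomorphic_space_prod_topology_sing2 topspace_discrete_topology)
qed

lemma perfect_map_snd_sum_of_subspaces:
  assumes "finite I" "\<And>i. i \<in> I \<Longrightarrow> closedin X (S i)" "(\<Union>i\<in>I. S i) = topspace X"
  shows "perfect_map (sum_of_subspaces X I S) X snd"
proof -
  let ?Z = "sum_of_subspaces X I S"
  have topspace_Z: "topspace ?Z = Sigma I S"
    by (rule topspace_sum_of_subspaces) (simp add: assms(2) closedin_subset)
  have "closedin (prod_topology (discrete_topology I) X) (\<Union>i\<in>I. {i} \<times> S i)"
    using assms(1,2) by (intro closedin_Union) (auto simp: closedin_prod_Times_iff)
  then have closed_Sigma: "closedin (prod_topology (discrete_topology I) X) (Sigma I S)"
    by (simp add: Sigma_def)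
  show ?thesis
    unfolding perfect_map_def proper_map_def
  proof (intro conjI ballI)
    show "continuous_map ?Z X snd"
      unfolding sum_of_subspaces_def by (intro continuous_map_from_subtopology continuous_map_snd)
    show "closed_map ?Z X snd"
      unfolding sum_of_subspaces_def using assms(1) closed_Sigma
      by (intro closed_map_from_subtopology closed_map_snd) (simp_all add: compact_space_discrete_topology)
    show "snd ` topspace ?Z = topspace X"
      unfolding topspace_Z snd_image_Sigma by (rule assms(3))
    fix y
    have "{z \<in> topspace ?Z. snd z = y} \<subseteq> I \<times> {y}"
      unfolding topspace_Z by auto
    then show "compactin ?Z {z \<in> topspace ?Z. snd z = y}"
      using assms(1) by (intro finite_imp_compactin) (auto intro: finite_subset)
  qed
qed

lemma compactness_like_homeomorphic_sum_of_subspaces: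
  fixes P :: "'a topology \<Rightarrow> bool" and T :: "'a topology"
  assumes cl: "compactness_like P" and ty: "tychonoff X" and "finite I"
    and closed: "\<And>i. i \<in> I \<Longrightarrow> closedin X (S i)"
    and P_pieces: "\<And>i. i \<in> I \<Longrightarrow> P (subtopology X (S i))"
    and j_homeo: "homeomorphic_map (sum_of_subspaces X I S) T j"
  shows "P T"
proof -
  let ?Z = "sum_of_subspaces X I S"
  have topspace_Z: "topspace ?Z = Sigma I S"
    by (rule topspace_sum_of_subspaces) (simp add: closed closedin_subset)
  have topspace_T: "topspace T = j ` Sigma I S"
    using homeomorphic_imp_surjective_map[OF j_homeo] unfolding topspace_Z by (rule sym)
  have ty_T: "tychonoff T"
    using homeomorphic_tychonoff[OF homeomorphic_map_imp_homeomorphic_space[OF j_homeo]]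
      tychonoff_sum_of_subspaces[OF ty] by blast
  have slice_closed: "closedin T (j ` ({i} \<times> S i))" if "i \<in> I" for i
    using closedin_slice_sum_of_subspaces[where S=S, OF that closed[OF that]]
    unfolding homeomorphic_map_closedness_eq[OF j_homeo] by blast
  have slice_P: "P (subtopology T (j ` ({i} \<times> S i)))" if "i \<in> I" for i
  proof -
    have "j ` (topspace ?Z \<inter> ({i} \<times> S i)) = topspace T \<inter> j ` ({i} \<times> S i)"
      using that by (auto simp: topspace_Z topspace_T)
    then have "homeomorphic_map (subtopology ?Z ({i} \<times> S i)) (subtopology T (j ` ({i} \<times> S i))) j"
      by (rule homeomorphic_map_subtopologies[OF j_homeo])
    then have "subtopology ?Z ({i} \<times> S i) homeomorphic_space subtopology T (j ` ({i} \<times> S i))"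
      by (rule homeomorphic_map_imp_homeomorphic_space)
    with homeomorphic_space_slice_sum_of_subspaces[OF that]
    have "subtopology X (S i) homeomorphic_space subtopology T (j ` ({i} \<times> S i))"
      by (rule homeomorphic_space_trans)
    then show ?thesis
      by (rule compactness_like_homeomorphic[OF cl tychonoff_subtopology[OF ty] _ P_pieces[OF that]])
  qed
  show "P T"
  proof (rule compactness_like_disjoint_closed_cover[OF cl ty_T])
    show "\<Union> ((\<lambda>i. j ` ({i} \<times> S i)) ` I) = topspace T"
      unfolding topspace_T by blast
    have "inj_on j (topspace ?Z)"
      using j_homeo by (rule homeomorphic_imp_injective_map)
    then show "pairwise disjnt ((\<lambda>i. j ` ({i} \<times> S i)) ` I)"
      by (auto simp: pairwise_def disjnt_def topspace_Z dest: inj_onD)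
  qed (use \<open>finite I\<close> slice_closed slice_P in auto)
qed

lemma compactness_like_finite_indexed_closed_cover:
  fixes P :: "'a topology \<Rightarrow> bool" and I :: "'i set" and j :: "'i \<times> 'a \<Rightarrow> 'a"
  assumes cl: "compactness_like P" and ty: "tychonoff X" and "inj j" "finite I"
    and closed: "\<And>i. i \<in> I \<Longrightarrow> closedin X (S i)"
    and P_pieces: "\<And>i. i \<in> I \<Longrightarrow> P (subtopology X (S i))"
    and cover: "(\<Union>i\<in>I. S i) = topspace X"
  shows "P X"
proof -
  let ?Z = "sum_of_subspaces X I S"
  define T where "T = pullback_topology (j ` topspace ?Z) (inv_into (topspace ?Z) j) ?Z"
  have j_homeo: "homeomorphic_map ?Z T j"
    unfolding T_def by (rule homeomorphic_map_pullback_inv_into[OF inj_on_subset[OF \<open>inj j\<close> subset_UNIV]])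
  have "P T"
    by (rule compactness_like_homeomorphic_sum_of_subspaces[OF cl ty \<open>finite I\<close> closed P_pieces j_homeo])
  obtain g where "homeomorphic_maps ?Z T j g"
    using j_homeo homeomorphic_map_maps by blast
  then have g_homeo: "homeomorphic_map T ?Z g"
    unfolding homeomorphic_maps_map by blast
  then have "perfect_map T X (snd \<circ> g)"
    using perfect_map_snd_sum_of_subspaces[OF \<open>finite I\<close> closed cover]
    by (intro perfect_map_compose[OF homeomorphic_imp_perfect_map])
  moreover have "tychonoff T"
    using homeomorphic_tychonoff[OF homeomorphic_map_imp_homeomorphic_space[OF g_homeo]]
      tychonoff_sum_of_subspaces[OF ty] by blast
  ultimately show "P X"
    using compactness_like_perfect_image[OF cl _ ty] \<open>P T\<close> by blast
qed

lemma compactness_like_finite_closed_cover: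
  fixes P :: "'a topology \<Rightarrow> bool"
  assumes cl: "compactness_like P" and ty: "tychonoff X" and "finite \<F>" "\<Union>\<F> = topspace X"
    and "\<And>F. F \<in> \<F> \<Longrightarrow> closedin X F" "\<And>F. F \<in> \<F> \<Longrightarrow> P (subtopology X F)"
  shows "P X"
proof (cases "finite (UNIV :: 'a set)")
  case True
  then show ?thesis
    using cl ty finite_subset[OF subset_UNIV] compactness_like_finite_space by blast
next
  case False
  then obtain j :: "nat \<times> 'a \<Rightarrow> 'a" where "inj j"
    by (rule infinite_imp_inj_nat_times)
  obtain f where f: "bij_betw f {0..<card \<F>} \<F>"
    using \<open>finite \<F>\<close> ex_bij_betw_nat_finite by blast
  then have f_mem: "f i \<in> \<F>" if "i \<in> {0..<card \<F>}" for i
    using that by (rule bij_betw_apply)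
  have "f ` {0..<card \<F>} = \<F>"
    using f by (rule bij_betw_imp_surj_on)
  then show ?thesis
    using assms f_mem
    by (intro compactness_like_finite_indexed_closed_cover[OF cl ty \<open>inj j\<close>, of "{0..<card \<F>}" f]) auto
qed

lemma embedding_map_mem_closure_of:
  assumes "embedding_map X K e" "C \<subseteq> topspace X" "x \<in> topspace X"
  shows "e x \<in> K closure_of (e ` C) \<longleftrightarrow> x \<in> X closure_of C"
proof -
  have hom: "homeomorphic_map X (subtopology K (e ` topspace X)) e"
    using assms(1) unfolding embedding_map_def .
  have "e x \<in> K closure_of (e ` C) \<longleftrightarrow> e x \<in> subtopology K (e ` topspace X) closure_of (e ` C)"
    using assms(2,3) by (simp add: closure_of_subtopology Int_absorb1 image_mono)
  also have "\<dots> \<longleftrightarrow> e x \<in> e ` (X closure_of C)"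
    by (simp add: homeomorphic_map_closure_of[OF hom assms(2)])
  also have "\<dots> \<longleftrightarrow> x \<in> X closure_of C"
    by (rule inj_on_image_mem_iff[OF homeomorphic_imp_injective_map[OF hom] assms(3) closure_of_subset_topspace])
  finally show ?thesis .
qed

lemma embedding_map_image_subset_topspace:
  "embedding_map X K e \<Longrightarrow> e ` topspace X \<subseteq> topspace K"
  unfolding embedding_map_def
  by (metis homeomorphic_imp_surjective_map inf_le1 topspace_subtopology)

lemma compact_space_cover_by_closures:
  assumes "compact_space K" "embedding_map X K e"
    and "(\<Union>C\<in>\<C>. K interior_of (K closure_of (e ` C))) = topspace K"
    and "\<And>C. C \<in> \<C> \<Longrightarrow> C \<subseteq> topspace X"
  obtains \<D> where "finite \<D>" "\<D> \<subseteq> \<C>" "(\<Union>C\<in>\<D>. X closure_of C) = topspace X"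
proof -
  let ?\<U> = "(\<lambda>C. K interior_of (K closure_of (e ` C))) ` \<C>"
  have "\<forall>U\<in>?\<U>. openin K U" "\<Union>?\<U> = topspace K"
    using assms(3) by auto
  then have "\<exists>\<F>. finite \<F> \<and> \<F> \<subseteq> ?\<U> \<and> \<Union>\<F> = topspace K"
    by (intro compact_space[THEN iffD1, OF assms(1), rule_format] conjI)
  then obtain \<F> where \<F>: "finite \<F>" "\<F> \<subseteq> ?\<U>" "\<Union>\<F> = topspace K"
    by metis
  obtain \<D> where \<D>: "\<D> \<subseteq> \<C>" "finite \<D>" "\<F> = (\<lambda>C. K interior_of (K closure_of (e ` C))) ` \<D>"
    using finite_subset_image[OF \<F>(1,2)] by blast
  have \<D>_cover: "(\<Union>C\<in>\<D>. K interior_of (K closure_of (e ` C))) = topspace K"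
    using \<F>(3) \<D>(3) by blast
  have "topspace X \<subseteq> (\<Union>C\<in>\<D>. X closure_of C)"
  proof
    fix x
    assume x: "x \<in> topspace X"
    then have "e x \<in> topspace K"
      using embedding_map_image_subset_topspace[OF assms(2)] by blast
    then have "e x \<in> (\<Union>C\<in>\<D>. K interior_of (K closure_of (e ` C)))"
      unfolding \<D>_cover .
    then obtain C where C: "C \<in> \<D>" "e x \<in> K interior_of (K closure_of (e ` C))"
      by (rule UN_E)
    have "e x \<in> K closure_of (e ` C)"
      by (rule subsetD[OF interior_of_subset C(2)])
    moreover have "C \<subseteq> topspace X"
      using C(1) \<D>(1) assms(4) by blast
    ultimately have "x \<in> X closure_of C"
      using embedding_map_mem_closure_of[OF assms(2) _ x] by blast
    then show "x \<in> (\<Union>C\<in>\<D>. X closure_of C)"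
      using C(1) by blast
  qed
  then have "(\<Union>C\<in>\<D>. X closure_of C) = topspace X"
    by (simp add: subset_antisym UN_least closure_of_subset_topspace)
  with \<D>(2,1) show thesis
    by (rule that)
qed

lemma cozero_set_topspace: "cozero_set X (topspace X)"
  unfolding cozero_set_def by (rule exI[of _ "\<lambda>x. 1"]) auto

lemma cozero_set_subset: "cozero_set X C \<Longrightarrow> C \<subseteq> topspace X"
  unfolding cozero_set_def by blast

theorem lemma4p21:
  fixes P :: "'a topology \<Rightarrow> bool" and X :: "'a topology"
    and K :: "'b topology" and e :: "'a \<Rightarrow> 'b"
  assumes "compactness_like P"
    and "tychonoff X"
    and "stone_cech X K e"
  shows "lambda_P P X K e = topspace K \<longleftrightarrow> P X"
proof -
  define \<C> where "\<C> = {C. cozero_set X C \<and> P (subtopology X (X closure_of C))}"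
  have lambda: "lambda_P P X K e = (\<Union>C\<in>\<C>. K interior_of (K closure_of (e ` C)))"
    unfolding lambda_P_def \<C>_def by (simp add: setcompr_eq_image)
  have K: "compact_space K" "embedding_map X K e" "K closure_of (e ` topspace X) = topspace K"
    using assms(3) unfolding stone_cech_def by blast+
  show ?thesis
  proof
    assume "lambda_P P X K e = topspace K"
    then have "(\<Union>C\<in>\<C>. K interior_of (K closure_of (e ` C))) = topspace K"
      unfolding lambda .
    then obtain \<D> where "finite \<D>" "\<D> \<subseteq> \<C>" "(\<Union>C\<in>\<D>. X closure_of C) = topspace X"
      by (rule compact_space_cover_by_closures[OF K(1,2)]) (simp add: \<C>_def cozero_set_subset)
    then show "P X"
      using assms(1,2) unfolding \<C>_def
      by (intro compactness_like_finite_closed_cover[of P X "(\<lambda>C. X closure_of C) ` \<D>"]) auto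
  next
    assume "P X"
    then have "topspace X \<in> \<C>"
      by (simp add: \<C>_def cozero_set_topspace)
    then have "K interior_of (K closure_of (e ` topspace X)) \<subseteq> lambda_P P X K e"
      unfolding lambda by (rule UN_upper)
    moreover have "lambda_P P X K e \<subseteq> topspace K"
      unfolding lambda by (simp add: UN_least interior_of_subset_topspace)
    ultimately show "lambda_P P X K e = topspace K"
      using K(3) by simp
  qed
qed

end
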